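(* Let $V$ be a finite connected graph and let $E_1,E_2,E_3\subseteq V$ be connected subgraphs such that every edge of $V$ lies in exactly two of $E_1,E_2,E_3$, and such that $E_1\cap E_2\cap E_3$ is a single vertex $w$. Then, after renumbering, $V$ has one of the following forms: (a) $E_1,E_2,E_3$ are all the single point $w$; (b) $E_1=\{w\}$ and $E_2=E_3=V$, and $V$ has at least one edge; (c) $V=E_1\cup E_2$ with $E_1\cap E_2=\{w\}$ (so $V=E_1\vee_wE_2$) and $E_3=V$, and each of $E_1,E_2,E_3$ has at least one edge; (d) $V=V_1\cup V_2\cup V_3$ for subgraphs $V_1,V_2,V_3$ any two of which meet exactly in $\{w\}$ (so $V=\bigvee_w V_i$), and $E_i=V_{i+1}\vee_w V_{i+2}$ (indices mod $3$), with each $E_i$ having at least one edge. *)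

theory Defs
  imports Main "HOL-Combinatorics.Permutations"
begin

text \<open>A finite (multi)graph is given by a vertex set Vs, an edge set Es and an
endpoint map ends assigning to every edge its set of one (loop) or two endpoints.\<close>

definition fin_graph :: "'v set \<Rightarrow> 'e set \<Rightarrow> ('e \<Rightarrow> 'v set) \<Rightarrow> bool" where
  "fin_graph Vs Es ends \<longleftrightarrow> finite Vs \<and> finite Es \<and>
     (\<forall>e\<in>Es. ends e \<subseteq> Vs \<and> 1 \<le> card (ends e) \<and> card (ends e) \<le> 2)"

definition is_subgraph :: "'v set \<Rightarrow> 'e set \<Rightarrow> ('e \<Rightarrow> 'v set) \<Rightarrow> 'v set \<Rightarrow> 'e set \<Rightarrow> bool" where
  "is_subgraph Vs Es ends SV SE \<longleftrightarrow> SV \<subseteq> Vs \<and> SE \<subseteq> Es \<and> (\<forall>e\<in>SE. ends e \<subseteq> SV)"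

definition adj_rel :: "('e \<Rightarrow> 'v set) \<Rightarrow> 'e set \<Rightarrow> ('v \<times> 'v) set" where
  "adj_rel ends SE = {(u, v). \<exists>e\<in>SE. ends e = {u, v}}"

definition connected_graph :: "('e \<Rightarrow> 'v set) \<Rightarrow> 'v set \<Rightarrow> 'e set \<Rightarrow> bool" where
  "connected_graph ends SV SE \<longleftrightarrow> SV \<noteq> {} \<and>
     (\<forall>u\<in>SV. \<forall>v\<in>SV. (u, v) \<in> (adj_rel ends SE)\<^sup>*)"

end

theory Submission
  imports Defs
begin

text \<open>Every edge lies in two of \<open>E\<^sub>0, E\<^sub>1, E\<^sub>2\<close>, and by connectedness every vertex other
  than \<open>w\<close> lies on an edge; so every vertex and every edge lies in at least two of them,
  i.e.\ any two of them cover the graph. Put \<open>W\<^sub>i = E\<^sub>i\<^sub>+\<^sub>1 \<inter> E\<^sub>i\<^sub>+\<^sub>2\<close>. Pure set theory then gives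
  \<open>V = W\<^sub>0 \<union> W\<^sub>1 \<union> W\<^sub>2\<close>, \<open>W\<^sub>i \<inter> W\<^sub>j = E\<^sub>0 \<inter> E\<^sub>1 \<inter> E\<^sub>2\<close> and \<open>E\<^sub>i = W\<^sub>i\<^sub>+\<^sub>1 \<union> W\<^sub>i\<^sub>+\<^sub>2\<close>: this is
  case (d) when every \<open>E\<^sub>i\<close> has an edge. If \<open>E\<^sub>k\<close> has no edge, its connectedness forces
  \<open>E\<^sub>k = {w}\<close>; each other \<open>E\<^sub>j\<close> contains \<open>E\<^sub>k\<close> and covers \<open>V\<close> together with it, so
  \<open>E\<^sub>j = V\<close>. This is case (b), or case (a) if \<open>V\<close> has no edge at all. Neither case (c),
  which here is the instance of (d) in which one \<open>W\<^sub>i\<close> is the point \<open>w\<close>, nor finiteness of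
  the graph is needed.\<close>

lemma less_3_iff: "(i::nat) < 3 \<longleftrightarrow> i = 0 \<or> i = 1 \<or> i = 2"
  by arith

definition covered_twice :: "'a set \<Rightarrow> (nat \<Rightarrow> 'a set) \<Rightarrow> bool" where
  "covered_twice U A \<longleftrightarrow>
     (\<forall>i<3. A i \<subseteq> U) \<and> (\<forall>i<3. \<forall>j<3. i \<noteq> j \<longrightarrow> U \<subseteq> A i \<union> A j)"

lemma covered_twiceD:
  assumes "covered_twice U A"
  shows "A 0 \<subseteq> U" "A 1 \<subseteq> U" "A 2 \<subseteq> U"
    and "U \<subseteq> A 0 \<union> A 1" "U \<subseteq> A 1 \<union> A 2" "U \<subseteq> A 2 \<union> A 0"
  using assms by (auto simp: covered_twice_def)

lemma covered_twice_if_card_eq_2: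
  assumes "\<And>i. i < 3 \<Longrightarrow> A i \<subseteq> U"
    and "\<And>x. x \<in> U \<Longrightarrow> card {i. i < 3 \<and> x \<in> A i} = 2"
  shows "covered_twice U A"
  unfolding covered_twice_def
proof (intro conjI allI impI subsetI)
  fix i j :: nat and x assume "i < 3" "j < 3" "i \<noteq> j" "x \<in> U"
  show "x \<in> A i \<union> A j"
  proof (rule ccontr)
    assume "x \<notin> A i \<union> A j"
    then have "card {k. k < 3 \<and> x \<in> A k} \<le> card ({..<3} - {i, j})"
      by (intro card_mono) auto
    also have "\<dots> = 1"
      using \<open>i < 3\<close> \<open>j < 3\<close> \<open>i \<noteq> j\<close> by (simp add: card_Diff_subset)
    finally show False
      using assms(2)[OF \<open>x \<in> U\<close>] by simp
  qed
qed (use assms(1) in blast)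

lemma covered_twice_eq_if_subset:
  assumes "covered_twice U A" "j < 3" "k < 3" "j \<noteq> k" "A k \<subseteq> A j"
  shows "A j = U"
  using assms unfolding covered_twice_def by blast

definition cyclic_meet :: "(nat \<Rightarrow> 'a set) \<Rightarrow> nat \<Rightarrow> 'a set" where
  "cyclic_meet A i = A ((i + 1) mod 3) \<inter> A ((i + 2) mod 3)"

text \<open>Since simp evaluates \<open>2 mod 3\<close> to \<open>Suc (Suc 0)\<close>, the index computations below are
  carried out with all small numerals in \<open>Suc\<close> form.\<close>

lemma cyclic_meet_Int:
  assumes "i < 3" "j < 3" "i \<noteq> j"
  shows "cyclic_meet A i \<inter> cyclic_meet A j = A 0 \<inter> A 1 \<inter> A 2"
  using assms unfolding less_3_iff
  by (elim disjE) (auto simp: cyclic_meet_def numeral_2_eq_2 One_nat_def)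

lemma covered_twice_Un_cyclic_meet:
  assumes "covered_twice U A" "i < 3"
  shows "A i = cyclic_meet A ((i + 1) mod 3) \<union> cyclic_meet A ((i + 2) mod 3)"
  using covered_twiceD[OF assms(1)] assms(2) unfolding less_3_iff
  by (elim disjE) (auto simp: cyclic_meet_def numeral_2_eq_2 One_nat_def)

lemma covered_twice_Union_cyclic_meet:
  assumes "covered_twice U A"
  shows "U = cyclic_meet A 0 \<union> cyclic_meet A 1 \<union> cyclic_meet A 2"
  using covered_twiceD[OF assms] by (auto simp: cyclic_meet_def numeral_2_eq_2 One_nat_def)

lemma is_subgraph_Int:
  assumes "is_subgraph Vs Es ends V1 E1" "is_subgraph Vs Es ends V2 E2"
  shows "is_subgraph Vs Es ends (V1 \<inter> V2) (E1 \<inter> E2)"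
  using assms by (auto simp: is_subgraph_def)

lemma connected_graph_no_edges:
  assumes "connected_graph ends SV {}" "w \<in> SV"
  shows "SV = {w}"
  using assms by (auto simp: connected_graph_def adj_rel_def)

lemma connected_graph_incident_edge:
  assumes "connected_graph ends Vs Es" "u \<in> Vs" "v \<in> Vs" "u \<noteq> v"
  shows "\<exists>e\<in>Es. u \<in> ends e"
proof -
  have "(u, v) \<in> (adj_rel ends Es)\<^sup>*"
    using assms(1-3) by (auto simp: connected_graph_def)
  then obtain y where "(u, y) \<in> adj_rel ends Es"
    using assms(4) by (metis converse_rtranclE)
  then show ?thesis
    by (auto simp: adj_rel_def)
qed

lemma covered_twice_vertices:
  assumes conn: "connected_graph ends Vs Es"
    and sub: "\<And>i. i < 3 \<Longrightarrow> is_subgraph Vs Es ends (SV i) (SE i)"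
    and edges: "covered_twice Es SE"
    and w: "\<And>i. i < 3 \<Longrightarrow> w \<in> SV i"
  shows "covered_twice Vs SV"
  unfolding covered_twice_def
proof (intro conjI allI impI subsetI)
  fix i j :: nat and v assume ij: "i < 3" "j < 3" "i \<noteq> j" and "v \<in> Vs"
  show "v \<in> SV i \<union> SV j"
  proof (cases "v = w")
    case False
    have "w \<in> Vs"
      using sub[of 0] w[of 0] by (auto simp: is_subgraph_def)
    then obtain e where "e \<in> Es" "v \<in> ends e"
      using connected_graph_incident_edge[OF conn \<open>v \<in> Vs\<close>] False by blast
    moreover have "Es \<subseteq> SE i \<union> SE j"
      using edges ij by (auto simp: covered_twice_def)
    ultimately show ?thesis
      using sub[OF ij(1)] sub[OF ij(2)] unfolding is_subgraph_def by blast
  qed (use w ij in simp)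
qed (auto dest!: sub simp: is_subgraph_def)

lemma wedge_decomposition:
  assumes sub: "\<forall>i<3. is_subgraph Vs Es ends (SV i) (SE i)"
    and vertices: "covered_twice Vs SV" and edges: "covered_twice Es SE"
    and meetV: "SV 0 \<inter> SV 1 \<inter> SV 2 = {w}" and meetE: "SE 0 \<inter> SE 1 \<inter> SE 2 = {}"
  shows "\<forall>i<3. is_subgraph Vs Es ends (cyclic_meet SV i) (cyclic_meet SE i)"
    and "Vs = cyclic_meet SV 0 \<union> cyclic_meet SV 1 \<union> cyclic_meet SV 2"
    and "Es = cyclic_meet SE 0 \<union> cyclic_meet SE 1 \<union> cyclic_meet SE 2"
    and "\<forall>i<3. \<forall>j<3. i \<noteq> j \<longrightarrow>
      cyclic_meet SV i \<inter> cyclic_meet SV j = {w} \<and> cyclic_meet SE i \<inter> cyclic_meet SE j = {}"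
    and "\<forall>i<3. SV i = cyclic_meet SV ((i + 1) mod 3) \<union> cyclic_meet SV ((i + 2) mod 3)
             \<and> SE i = cyclic_meet SE ((i + 1) mod 3) \<union> cyclic_meet SE ((i + 2) mod 3)"
proof -
  show "\<forall>i<3. is_subgraph Vs Es ends (cyclic_meet SV i) (cyclic_meet SE i)"
    unfolding cyclic_meet_def using sub by (simp add: is_subgraph_Int)
  show "Vs = cyclic_meet SV 0 \<union> cyclic_meet SV 1 \<union> cyclic_meet SV 2"
    by (rule covered_twice_Union_cyclic_meet[OF vertices])
  show "Es = cyclic_meet SE 0 \<union> cyclic_meet SE 1 \<union> cyclic_meet SE 2"
    by (rule covered_twice_Union_cyclic_meet[OF edges])
  show "\<forall>i<3. \<forall>j<3. i \<noteq> j \<longrightarrow>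
      cyclic_meet SV i \<inter> cyclic_meet SV j = {w} \<and> cyclic_meet SE i \<inter> cyclic_meet SE j = {}"
    using cyclic_meet_Int meetV meetE by metis
  show "\<forall>i<3. SV i = cyclic_meet SV ((i + 1) mod 3) \<union> cyclic_meet SV ((i + 2) mod 3)
             \<and> SE i = cyclic_meet SE ((i + 1) mod 3) \<union> cyclic_meet SE ((i + 2) mod 3)"
    using covered_twice_Un_cyclic_meet[OF vertices] covered_twice_Un_cyclic_meet[OF edges] by simp
qed

lemma permutes_3_sending_0:
  assumes "k < 3"
  obtains \<sigma> :: "nat \<Rightarrow> nat" where "\<sigma> permutes {0, 1, 2}" "\<sigma> 0 = k"
    "\<sigma> 1 < 3" "\<sigma> 1 \<noteq> k" "\<sigma> 2 < 3" "\<sigma> 2 \<noteq> k"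
proof
  show "transpose 0 k permutes {0, 1, 2}"
    using assms by (intro permutes_swap_id) (auto simp: less_3_iff)
qed (use assms in \<open>auto simp: transpose_def less_3_iff\<close>)

theorem lemma4p4:
  fixes Vs :: "'v set" and Es :: "'e set" and ends :: "'e \<Rightarrow> 'v set"
    and EV :: "nat \<Rightarrow> 'v set" and EE :: "nat \<Rightarrow> 'e set" and w :: 'v
  assumes graph: "fin_graph Vs Es ends"
    and conn: "connected_graph ends Vs Es"
    and sub: "\<And>i. i < 3 \<Longrightarrow> is_subgraph Vs Es ends (EV i) (EE i)"
    and subconn: "\<And>i. i < 3 \<Longrightarrow> connected_graph ends (EV i) (EE i)"
    and two: "\<And>e. e \<in> Es \<Longrightarrow> card {i. i < 3 \<and> e \<in> EE i} = 2"
    and meetV: "EV 0 \<inter> EV 1 \<inter> EV 2 = {w}"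
    and meetE: "EE 0 \<inter> EE 1 \<inter> EE 2 = {}"
  shows "\<exists>\<sigma>. \<sigma> permutes {0::nat, 1, 2} \<and>
    (let FV = EV \<circ> \<sigma>; FE = EE \<circ> \<sigma> in
      \<comment> \<open>(a)\<close>
      (\<forall>i<3. FV i = {w} \<and> FE i = {})
      \<comment> \<open>(b)\<close>
    \<or> (FV 0 = {w} \<and> FE 0 = {} \<and> FV 1 = Vs \<and> FE 1 = Es \<and> FV 2 = Vs \<and> FE 2 = Es
        \<and> Es \<noteq> {})
      \<comment> \<open>(c)\<close>
    \<or> (Vs = FV 0 \<union> FV 1 \<and> Es = FE 0 \<union> FE 1 \<and> FV 0 \<inter> FV 1 = {w} \<and> FE 0 \<inter> FE 1 = {}
        \<and> FV 2 = Vs \<and> FE 2 = Es \<and> (\<forall>i<3. FE i \<noteq> {}))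
      \<comment> \<open>(d)\<close>
    \<or> (\<exists>WV :: nat \<Rightarrow> 'v set. \<exists>WE :: nat \<Rightarrow> 'e set.
          (\<forall>i<3. is_subgraph Vs Es ends (WV i) (WE i))
        \<and> Vs = WV 0 \<union> WV 1 \<union> WV 2 \<and> Es = WE 0 \<union> WE 1 \<union> WE 2
        \<and> (\<forall>i<3. \<forall>j<3. i \<noteq> j \<longrightarrow> WV i \<inter> WV j = {w} \<and> WE i \<inter> WE j = {})
        \<and> (\<forall>i<3. FV i = WV ((i + 1) mod 3) \<union> WV ((i + 2) mod 3)
                 \<and> FE i = WE ((i + 1) mod 3) \<union> WE ((i + 2) mod 3))
        \<and> (\<forall>i<3. FE i \<noteq> {})))"
proof -
  have w_in: "w \<in> EV i" if "i < 3" for i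
    using meetV that by (auto simp: less_3_iff)
  have EE_sub: "EE i \<subseteq> Es" if "i < 3" for i
    using sub[OF that] by (simp add: is_subgraph_def)
  have edges: "covered_twice Es EE"
    using EE_sub two by (rule covered_twice_if_card_eq_2)
  have vertices: "covered_twice Vs EV"
    using conn sub edges w_in by (rule covered_twice_vertices)
  have point_if_no_edges: "EV i = {w}" if "i < 3" "EE i = {}" for i
    using connected_graph_no_edges[OF _ w_in] subconn that by metis
  show ?thesis
  proof (cases "\<forall>i<3. EE i \<noteq> {}")
    case True
    have subgraphs: "\<forall>i<3. is_subgraph Vs Es ends (EV i) (EE i)"
      using sub by blast
    show ?thesis
      unfolding Let_def
      by (intro exI[of _ id] conjI permutes_id, unfold o_id,
          intro disjI2 exI[of _ "cyclic_meet EV"] exI[of _ "cyclic_meet EE"] conjI)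
        (fact wedge_decomposition[OF subgraphs vertices edges meetV meetE] True)+
  next
    case False
    then obtain k where k: "k < 3" "EE k = {}"
      by blast
    show ?thesis
    proof (cases "Es = {}")
      case True
      then show ?thesis
        using EE_sub point_if_no_edges
        by (intro exI[of _ id] conjI permutes_id) (simp add: Let_def)
    next
      case False
      obtain \<sigma> where "\<sigma> permutes {0, 1, 2}" "\<sigma> 0 = k"
        "\<sigma> 1 < 3" "\<sigma> 1 \<noteq> k" "\<sigma> 2 < 3" "\<sigma> 2 \<noteq> k"
        using permutes_3_sending_0[OF k(1)] .
      moreover have "EE j = Es \<and> EV j = Vs" if "j < 3" "j \<noteq> k" for j
        using covered_twice_eq_if_subset[OF edges that(1) k(1) that(2)]
          covered_twice_eq_if_subset[OF vertices that(1) k(1) that(2)]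
          k point_if_no_edges[OF k] w_in[OF that(1)] by simp
      ultimately show ?thesis
        using point_if_no_edges[OF k] k(2) False
        by (intro exI[of _ \<sigma>]) (simp add: Let_def)
    qed
  qed
qed

end
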